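(* Let $X$ be a Polish space and let $T$ be either a (global) jointly continuous semigroup on $X$ or a local semigroup on $X$, and let $A$ be the Lie generator of $T$. Then $A$ has a positive eigenvalue (i.e. there exist $\lambda>0$ and $f \in D(A)$, $f\neq 0$, with $Af=\lambda f$) if and only if $T$ is a local semigroup.
   Context: $CB(X)$ denotes the Banach space (sup norm) of bounded continuous real-valued functions on $X$. A (global) jointly continuous semigroup on $X$ is a map $t\mapsto T(t)$ from $[0,\infty)$ to the set of maps $X\to X$ such that $T(0)x=x$ for all $x\in X$, $T(t)T(s)=T(t+s)$ for all $t,s\ge 0$ (composition), and $(t,x)\mapsto T(t)x$ is continuous on $[0,\infty)\times X$. A local semigroup on $X$ is given by a function $m: X\to(0,\infty]$ such that $1/m$ (with $1/\infty=0$) is continuous and $m$ is not identically $\infty$, together with maps $T(t)$ such that: $x\in D(T(t))$ if and only if $t\in[0,m(x))$; $T(0)x=x$; for $t,s\ge0$ and $x\in X$, $T(t)T(s)x=T(t+s)x$ holds if and only if $t+s<m(x)$; $(t,x)\mapsto T(t)x$ is continuous on $\{(t,x): 0\le t<m(x)\}$; and $T$ is maximal: if $\lim_{t\to s^-}T(t)x$ exists then $s<m(x)$. The Lie generator of $T$ is the linear operator $A$ on $CB(X)$ given by $A=\{(f,g)\in CB(X)^2 : g(x)=\lim_{t\to0^+}\frac1t\,(f(T(t)x)-f(x)) \text{ for every } x\in X\}$, i.e. $f\in D(A)$ and $Af=g$ exactly when this limit exists for every $x$ and defines a function $g\in CB(X)$. *)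

theory Defs
  imports "HOL-Analysis.Analysis" "HOL-Library.Extended_Real"
begin

definition global_semigroup :: "(real \<Rightarrow> 'a::topological_space \<Rightarrow> 'a) \<Rightarrow> bool" where
  "global_semigroup T \<longleftrightarrow>
     (\<forall>x. T 0 x = x) \<and>
     (\<forall>t s x. 0 \<le> t \<longrightarrow> 0 \<le> s \<longrightarrow> T t (T s x) = T (t + s) x) \<and>
     continuous_on ({0..} \<times> UNIV) (\<lambda>(t, x). T t x)"

text \<open>A local semigroup with lifetime m: T t x is meaningful exactly for 0 \<le> t < m x;
  outside this domain the value of T t x is irrelevant junk.\<close>
definition local_semigroup :: "('a::topological_space \<Rightarrow> ereal) \<Rightarrow> (real \<Rightarrow> 'a \<Rightarrow> 'a) \<Rightarrow> bool" where
  "local_semigroup m T \<longleftrightarrow>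
     (\<forall>x. 0 < m x) \<and>
     continuous_on UNIV (\<lambda>x. inverse (m x)) \<and>
     (\<exists>x. m x \<noteq> \<infinity>) \<and>
     (\<forall>x. T 0 x = x) \<and>
     (\<forall>t s x. 0 \<le> t \<longrightarrow> 0 \<le> s \<longrightarrow>
        ((ereal s < m x \<and> ereal t < m (T s x)) \<longleftrightarrow> ereal (t + s) < m x)) \<and>
     (\<forall>t s x. 0 \<le> t \<longrightarrow> 0 \<le> s \<longrightarrow> ereal (t + s) < m x \<longrightarrow> T t (T s x) = T (t + s) x) \<and>
     continuous_on {(t, x). 0 \<le> t \<and> ereal t < m x} (\<lambda>(t, x). T t x) \<and>
     (\<forall>x s. 0 < s \<longrightarrow> ereal s \<le> m x \<longrightarrow> (\<exists>l. ((\<lambda>t. T t x) \<longlongrightarrow> l) (at_left s)) \<longrightarrow> ereal s < m x)"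

definition lie_generator :: "(real \<Rightarrow> 'a::metric_space \<Rightarrow> 'a) \<Rightarrow> (('a \<Rightarrow>\<^sub>C real) \<times> ('a \<Rightarrow>\<^sub>C real)) set" where
  "lie_generator T = {(f, g). \<forall>x. ((\<lambda>t. (apply_bcontfun f (T t x) - apply_bcontfun f x) / t) \<longlongrightarrow> apply_bcontfun g x) (at_right 0)}"

definition has_positive_eigenvalue :: "(('a::metric_space \<Rightarrow>\<^sub>C real) \<times> ('a \<Rightarrow>\<^sub>C real)) set \<Rightarrow> bool" where
  "has_positive_eigenvalue A \<longleftrightarrow> (\<exists>c>0. \<exists>f. f \<noteq> 0 \<and> (f, c *\<^sub>R f) \<in> A)"

end

theory Submission
  imports Defs "HOL-Real_Asymp.Real_Asymp"
begin

(* Global case: if A f = c f with c > 0 and f x \<noteq> 0, then along the orbit of x the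
   function \<phi> t = \<plusminus>f(T t x) is continuous, starts positive, and has right derivative
   c \<phi> t for every t \<ge> 0.  A comparison argument (a continuous function whose right
   increments are eventually nonnegative wherever it is nonnegative stays nonnegative)
   shows \<phi> t \<ge> \<phi> 0 (1 + c t / 2), contradicting the bound \<phi> \<le> \<parallel>f\<parallel>.

   Local case: the lifetime decreases at unit speed along orbits, m (T t x) = m x - t,
   so F x = exp (- m x) (with F x = 0 when m x = \<infinity>) satisfies
   F (T t x) = e^t F x and hence A F = F.  F is bounded and continuous because it equals
   g (1 / m x) for the continuous function g s = exp (-1/s) (s > 0), g s = 0 (s \<le> 0),
   and 1/m is continuous by assumption; F \<noteq> 0 because m is somewhere finite. *)

section \<open>A comparison principle for right increments\<close>

text \<open>If a continuous function on [0,\<infinity>) starts nonnegative and, at every point where it is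
  nonnegative, does not decrease over all sufficiently short steps to the right, then it
  stays nonnegative.  The proof takes the last zero-crossing on [0,b].\<close>

lemma nonneg_by_right_increments:
  fixes g :: "real \<Rightarrow> real"
  assumes cont: "continuous_on {0..} g" and start: "g 0 \<ge> 0"
    and step: "\<And>\<tau>. \<tau> \<ge> 0 \<Longrightarrow> g \<tau> \<ge> 0 \<Longrightarrow> \<forall>\<^sub>F h in at_right 0. g \<tau> \<le> g (\<tau> + h)"
    and b: "b \<ge> 0"
  shows "g b \<ge> 0"
proof (rule ccontr)
  assume gb: "\<not> g b \<ge> 0"
  define Z where "Z = {0..b} \<inter> g -` {0..}"
  have "closed Z" unfolding Z_def
    by (rule continuous_closed_preimage[OF continuous_on_subset[OF cont]]) auto
  moreover have "bounded Z" unfolding Z_def by (rule bounded_subset[of "{0..b}"]) auto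
  moreover have "0 \<in> Z" unfolding Z_def using b start by auto
  ultimately obtain \<tau> where \<tau>Z: "\<tau> \<in> Z" and \<tau>max: "\<And>z. z \<in> Z \<Longrightarrow> z \<le> \<tau>"
    using compact_attains_sup[of Z] by (metis compact_eq_bounded_closed empty_iff)
  have \<tau>: "0 \<le> \<tau>" "\<tau> \<le> b" "g \<tau> \<ge> 0" using \<tau>Z unfolding Z_def by auto
  have "\<tau> < b" using \<tau> gb by (cases "\<tau> = b") auto
  then have "\<forall>\<^sub>F h in at_right 0. g \<tau> \<le> g (\<tau> + h) \<and> h \<in> {0<..<b - \<tau>}"
    using step[OF \<tau>(1,3)] eventually_at_right_real[of 0 "b - \<tau>"] by (auto intro: eventually_conj)
  then obtain h where "g \<tau> \<le> g (\<tau> + h)" "0 < h" "h < b - \<tau>"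
    using eventually_happens by fastforce
  then have "\<tau> + h \<in> Z" using \<tau> unfolding Z_def by auto
  then show False using \<tau>max \<open>0 < h\<close> by fastforce
qed

lemma right_derivative_linear_growth:
  fixes \<phi> :: "real \<Rightarrow> real"
  assumes cont: "continuous_on {0..} \<phi>" and pos: "\<phi> 0 > 0" and c: "c > 0"
    and der: "\<And>t. t \<ge> 0 \<Longrightarrow> ((\<lambda>h. (\<phi> (t + h) - \<phi> t) / h) \<longlongrightarrow> c * \<phi> t) (at_right 0)"
    and t: "t \<ge> 0"
  shows "\<phi> t \<ge> \<phi> 0 + c * \<phi> 0 / 2 * t"
proof -
  define a where "a = \<phi> 0"
  define g where "g t = \<phi> t - a - c * a / 2 * t" for t
  have "g t \<ge> 0"
  proof (rule nonneg_by_right_increments[OF _ _ _ t])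
    show "continuous_on {0..} g" unfolding g_def by (intro continuous_intros cont)
    show "g 0 \<ge> 0" by (simp add: g_def a_def)
  next
    fix \<tau> :: real assume \<tau>: "\<tau> \<ge> 0" "g \<tau> \<ge> 0"
    have "c * a / 2 * \<tau> \<ge> 0" using \<tau> pos c by (simp add: a_def)
    then have "\<phi> \<tau> \<ge> a" using \<tau> unfolding g_def by linarith
    then have "c * \<phi> \<tau> > c * a / 2" using c pos by (simp add: a_def)
    then have "\<forall>\<^sub>F h in at_right 0. (\<phi> (\<tau> + h) - \<phi> \<tau>) / h > c * a / 2 \<and> h > 0"
      by (intro eventually_conj order_tendstoD(1)[OF der[OF \<tau>(1)]] eventually_at_right_less)
    then show "\<forall>\<^sub>F h in at_right 0. g \<tau> \<le> g (\<tau> + h)"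
    proof (rule eventually_mono)
      fix h assume "(\<phi> (\<tau> + h) - \<phi> \<tau>) / h > c * a / 2 \<and> h > 0"
      then have "c * a / 2 * h < \<phi> (\<tau> + h) - \<phi> \<tau>" using pos_less_divide_eq by blast
      then show "g \<tau> \<le> g (\<tau> + h)" unfolding g_def by (simp add: field_simps)
    qed
  qed
  then show ?thesis unfolding g_def a_def by simp
qed

lemma right_derivative_unbounded:
  fixes \<phi> :: "real \<Rightarrow> real"
  assumes cont: "continuous_on {0..} \<phi>" and pos: "\<phi> 0 > 0" and c: "c > 0"
    and der: "\<And>t. t \<ge> 0 \<Longrightarrow> ((\<lambda>h. (\<phi> (t + h) - \<phi> t) / h) \<longlongrightarrow> c * \<phi> t) (at_right 0)"
  shows "\<exists>t\<ge>0. \<phi> t > M"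
proof -
  define t where "t = 2 * \<bar>M\<bar> / (c * \<phi> 0) + 1"
  have t0: "t \<ge> 0" unfolding t_def using pos c by simp
  have "c * \<phi> 0 / 2 * t = \<bar>M\<bar> + c * \<phi> 0 / 2" unfolding t_def using pos c by (simp add: field_simps)
  moreover have "c * \<phi> 0 / 2 > 0" using pos c by simp
  ultimately have "\<phi> t > M"
    using right_derivative_linear_growth[OF cont pos c der t0] pos abs_ge_self[of M] by linarith
  then show ?thesis using t0 by blast
qed

section \<open>Global semigroups have no positive eigenvalue\<close>

lemma eigenfunction_along_orbit:
  assumes G: "global_semigroup T" and gen: "(f, c *\<^sub>R f) \<in> lie_generator T" and t: "t \<ge> 0"
  shows "((\<lambda>h. (f (T (t + h) x) - f (T t x)) / h) \<longlongrightarrow> c * f (T t x)) (at_right 0)"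
proof -
  have flow: "T h (T t x) = T (h + t) x" if "h > 0" for h
    using G that t unfolding global_semigroup_def by simp
  have "((\<lambda>h. (f (T h (T t x)) - f (T t x)) / h) \<longlongrightarrow> c * f (T t x)) (at_right 0)"
    using gen unfolding lie_generator_def by simp
  then show ?thesis
    by (rule Lim_transform_eventually)
       (auto intro: eventually_mono[OF eventually_at_right_less] simp: flow add.commute)
qed

lemma global_no_positive_eigenvalue:
  fixes T :: "real \<Rightarrow> 'a::metric_space \<Rightarrow> 'a"
  assumes G: "global_semigroup T"
  shows "\<not> has_positive_eigenvalue (lie_generator T)"
proof
  assume "has_positive_eigenvalue (lie_generator T)"
  then obtain c f where c: "c > 0" and "f \<noteq> 0" and gen: "(f, c *\<^sub>R f) \<in> lie_generator T"
    unfolding has_positive_eigenvalue_def by blast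
  then obtain x where fx: "f x \<noteq> 0" using bcontfun_eqI[of f 0] by auto
  text \<open>Flip the sign so that the orbit function starts positive.\<close>
  define \<sigma> where "\<sigma> = sgn (f x)"
  define \<phi> where "\<phi> t = \<sigma> * f (T t x)" for t
  have orbit_cont: "continuous_on {0..} (\<lambda>t. T t x)"
    using continuous_on_compose2[of "{0..} \<times> UNIV" "\<lambda>(t, x). T t x" "{0..}" "\<lambda>t. (t, x)"] G
    unfolding global_semigroup_def by (force intro: continuous_intros)
  have cont: "continuous_on {0..} \<phi>" unfolding \<phi>_def
    by (intro continuous_intros continuous_on_compose2[OF continuous_on_apply_bcontfun orbit_cont]) auto
  have pos: "\<phi> 0 > 0" using G fx unfolding \<phi>_def \<sigma>_def global_semigroup_def
    by (cases "f x > 0") (auto simp: sgn_if mult_less_0_iff)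
  have der: "((\<lambda>h. (\<phi> (t + h) - \<phi> t) / h) \<longlongrightarrow> c * \<phi> t) (at_right 0)" if "t \<ge> 0" for t
    using tendsto_mult[OF tendsto_const[of \<sigma>] eigenfunction_along_orbit[OF G gen that, of x]]
    by (simp add: \<phi>_def right_diff_distrib ac_simps)
  obtain t where "\<phi> t > norm f" using right_derivative_unbounded[OF cont pos c der] by blast
  moreover have "\<phi> t \<le> \<bar>f (T t x)\<bar>" unfolding \<phi>_def \<sigma>_def
    by (cases "f x > 0") (auto simp: sgn_if)
  ultimately show False using norm_bounded[of f "T t x"] by simp
qed

section \<open>Local semigroups have the eigenvalue 1\<close>

lemma ereal_eq_by_lower_reals:
  fixes A B :: ereal
  assumes "A > 0" and "B > 0" and below: "\<And>t. t \<ge> 0 \<Longrightarrow> ereal t < A \<longleftrightarrow> ereal t < B"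
  shows "A = B"
proof (rule ccontr)
  assume "A \<noteq> B"
  then consider "A < B" | "B < A" by fastforce
  then show False
  proof cases
    case 1
    then obtain v where "A = ereal v" using \<open>A > 0\<close> by (cases A) auto
    then show False using below[of v] \<open>A > 0\<close> 1 by simp
  next
    case 2
    then obtain v where "B = ereal v" using \<open>B > 0\<close> by (cases B) auto
    then show False using below[of v] \<open>B > 0\<close> 2 by simp
  qed
qed

lemma lifetime_along_orbit:
  assumes L: "local_semigroup m T" and s: "0 \<le> s" and sm: "ereal s < m x"
  shows "m (T s x) = m x - ereal s"
proof (rule ereal_eq_by_lower_reals)
  have mpos: "\<And>x. 0 < m x" and dom: "\<And>t s x. 0 \<le> t \<Longrightarrow> 0 \<le> s \<Longrightarrow>
        ((ereal s < m x \<and> ereal t < m (T s x)) \<longleftrightarrow> ereal (t + s) < m x)"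
    using L unfolding local_semigroup_def by auto
  show "0 < m (T s x)" by (rule mpos)
  show "0 < m x - ereal s" using sm by (cases "m x") auto
  fix t :: real assume t: "t \<ge> 0"
  have "ereal t < m (T s x) \<longleftrightarrow> ereal (t + s) < m x" using dom[OF t s, of x] sm by auto
  also have "\<dots> \<longleftrightarrow> ereal t < m x - ereal s" using mpos[of x] by (cases "m x") auto
  finally show "ereal t < m (T s x) \<longleftrightarrow> ereal t < m x - ereal s" .
qed

text \<open>The function s \<mapsto> exp (-1/s) for s > 0, extended by 0; it turns 1/m into exp (-m).\<close>

definition exp_neg_inverse :: "real \<Rightarrow> real" where
  "exp_neg_inverse s = (if s \<le> 0 then 0 else exp (-1 / s))"

lemma continuous_exp_neg_inverse: "continuous_on UNIV exp_neg_inverse"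
proof (rule continuous_at_imp_continuous_on, intro ballI)
  fix s :: real
  consider "s < 0" | "s = 0" | "s > 0" by linarith
  then show "isCont exp_neg_inverse s"
  proof cases
    case 1
    have "\<forall>\<^sub>F y in nhds s. 0 = exp_neg_inverse y"
      using eventually_nhds_in_open[of "{..<0}" s] 1
      by (auto elim!: eventually_mono simp: exp_neg_inverse_def)
    then show ?thesis by (simp add: isCont_cong)
  next
    case 3
    have "\<forall>\<^sub>F y in nhds s. exp (-1 / y) = exp_neg_inverse y"
      using eventually_nhds_in_open[of "{0<..}" s] 3
      by (auto elim!: eventually_mono simp: exp_neg_inverse_def)
    moreover have "isCont (\<lambda>y. exp (-1 / y)) s" using 3 by (intro continuous_intros) auto
    ultimately show ?thesis by (simp add: isCont_cong)
  next
    case 2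
    have "(exp_neg_inverse \<longlongrightarrow> 0) (at_left 0)"
      by (rule Lim_transform_eventually[OF tendsto_const])
         (simp add: eventually_at_filter exp_neg_inverse_def)
    moreover have "(exp_neg_inverse \<longlongrightarrow> 0) (at_right 0)"
    proof (rule Lim_transform_eventually)
      show "((\<lambda>y::real. exp (-1 / y)) \<longlongrightarrow> 0) (at_right 0)" by real_asymp
      show "\<forall>\<^sub>F y in at_right 0. exp (-1 / y) = exp_neg_inverse y"
        by (simp add: eventually_at_filter exp_neg_inverse_def)
    qed
    ultimately show ?thesis
      unfolding 2 isCont_def by (simp add: filterlim_split_at exp_neg_inverse_def)
  qed
qed

lemma exp_neg_inverse_bound: "\<bar>exp_neg_inverse s\<bar> \<le> 1"
  by (simp add: exp_neg_inverse_def)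

text \<open>The candidate eigenfunction exp (- m x), read as 0 where the lifetime is infinite.\<close>

definition exp_neg_lifetime :: "('a \<Rightarrow> ereal) \<Rightarrow> 'a \<Rightarrow> real" where
  "exp_neg_lifetime m x = exp_neg_inverse (real_of_ereal (inverse (m x)))"

lemma exp_neg_lifetime_infinite: "m x = \<infinity> \<Longrightarrow> exp_neg_lifetime m x = 0"
  by (simp add: exp_neg_lifetime_def exp_neg_inverse_def)

lemma exp_neg_lifetime_finite: "m x = ereal r \<Longrightarrow> r > 0 \<Longrightarrow> exp_neg_lifetime m x = exp (-r)"
  by (simp add: exp_neg_lifetime_def exp_neg_inverse_def inverse_eq_divide)

text \<open>Continuity of 1/m makes exp (- m) a bounded continuous function.\<close>

lemma exp_neg_lifetime_bcontfun:
  assumes L: "local_semigroup m T"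
  shows "exp_neg_lifetime m \<in> bcontfun"
proof -
  have mpos: "\<And>x. 0 < m x" and inv_cont: "continuous_on UNIV (\<lambda>x. inverse (m x))"
    using L unfolding local_semigroup_def by auto
  have "(\<lambda>x. inverse (m x)) ` UNIV \<subseteq> UNIV - {\<infinity>, -\<infinity>}"
  proof safe
    fix x show "inverse (m x) = \<infinity> \<Longrightarrow> False" "inverse (m x) = -\<infinity> \<Longrightarrow> False"
      using mpos[of x] by (cases "m x"; simp)+
  qed simp
  then have "continuous_on UNIV (\<lambda>x. real_of_ereal (inverse (m x)))"
    by (rule continuous_on_compose2[OF continuous_on_real inv_cont])
  then show ?thesis unfolding exp_neg_lifetime_def
    by (intro bcontfun_normI[where b=1] continuous_on_compose2[OF continuous_exp_neg_inverse])
       (simp_all add: exp_neg_inverse_bound)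
qed

text \<open>Along orbits exp (- m) grows like e^t, so its Lie derivative equals itself.\<close>

lemma exp_neg_lifetime_lie_derivative:
  assumes L: "local_semigroup m T"
  shows "((\<lambda>t. (exp_neg_lifetime m (T t x) - exp_neg_lifetime m x) / t)
           \<longlongrightarrow> exp_neg_lifetime m x) (at_right 0)"
proof -
  have "0 < m x" using L unfolding local_semigroup_def by auto
  then consider "m x = \<infinity>" | r where "m x = ereal r" "r > 0" by (cases "m x") auto
  then show ?thesis
  proof cases
    case 1
    have "exp_neg_lifetime m (T t x) = 0" if "t > 0" for t
      using lifetime_along_orbit[OF L, of t x] that 1 by (simp add: exp_neg_lifetime_infinite)
    then show ?thesis
      by (intro Lim_transform_eventually[OF tendsto_const]
          eventually_mono[OF eventually_at_right_less])
         (simp add: 1 exp_neg_lifetime_infinite)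
  next
    case (2 r)
    have orbit: "exp_neg_lifetime m (T t x) = exp t * exp (-r)" if "t \<in> {0<..<r}" for t
      using lifetime_along_orbit[OF L, of t x] that 2
      by (simp add: exp_neg_lifetime_finite exp_add[symmetric])
    have "((\<lambda>t. exp (-r) * ((exp t - 1) / t)) \<longlongrightarrow> exp (-r) * 1) (at_right 0)"
      by (intro tendsto_mult tendsto_const) real_asymp
    moreover have "\<forall>\<^sub>F t in at_right 0. exp (-r) * ((exp t - 1) / t)
        = (exp_neg_lifetime m (T t x) - exp_neg_lifetime m x) / t"
      by (rule eventually_mono[OF eventually_at_right_real[OF \<open>r > 0\<close>]])
         (simp add: orbit 2 exp_neg_lifetime_finite algebra_simps diff_divide_distrib)
    ultimately show ?thesis
      using Lim_transform_eventually by (fastforce simp: 2 exp_neg_lifetime_finite)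
  qed
qed

lemma local_positive_eigenvalue:
  fixes T :: "real \<Rightarrow> 'a::metric_space \<Rightarrow> 'a" and m :: "'a \<Rightarrow> ereal"
  assumes L: "local_semigroup m T"
  shows "has_positive_eigenvalue (lie_generator T)"
proof -
  define f where "f = Bcontfun (exp_neg_lifetime m)"
  have f: "apply_bcontfun f = exp_neg_lifetime m"
    unfolding f_def using exp_neg_lifetime_bcontfun[OF L] by (simp add: Bcontfun_inverse)
  obtain x where "m x \<noteq> \<infinity>" "0 < m x" using L unfolding local_semigroup_def by auto
  then obtain r where "m x = ereal r" "r > 0" by (cases "m x") auto
  then have "f x \<noteq> 0" by (simp add: f exp_neg_lifetime_finite)
  then have "f \<noteq> 0" by auto
  moreover have "(f, 1 *\<^sub>R f) \<in> lie_generator T"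
    unfolding lie_generator_def using exp_neg_lifetime_lie_derivative[OF L] by (simp add: f)
  ultimately show ?thesis unfolding has_positive_eigenvalue_def by (intro exI[of _ 1]) auto
qed

theorem theorem3:
  fixes T :: "real \<Rightarrow> 'a::polish_space \<Rightarrow> 'a" and m :: "'a \<Rightarrow> ereal"
  assumes "global_semigroup T \<or> local_semigroup m T"
  shows "has_positive_eigenvalue (lie_generator T) \<longleftrightarrow> local_semigroup m T"
proof (cases "local_semigroup m T")
  case True
  then show ?thesis using local_positive_eigenvalue[of m T] by simp
next
  case False
  then have "global_semigroup T" using assms by simp
  then show ?thesis using global_no_positive_eigenvalue[of T] False by simp
qed

end
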